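(* Let $\epsilon>1$ and $\beta>0$. The scalar system $$\dot x=-\beta\frac{x}{(1+x^2)^{1/2}},\qquad x\in\mathbb{R},$$ is $SISS_L\!\left(\frac{\beta}{2},\frac{2\epsilon}{\beta}\right)$, its origin is globally asymptotically stable, and its linearization at $0$ is asymptotically stable.
   Context: Eventually bounded: $f:\mathbb{R}_{\ge0}\to\mathbb{R}^k$ is eventually bounded by $\delta$ if there is $T>0$ with $\|f(t)\|\le\delta$ for all $t\ge T$. $SISS_L(\Delta,N)$ for an input-free system $\dot x=f(x)$: for every $\delta\in(0,\Delta]$ and every bounded measurable $e:\mathbb{R}_{\ge0}\to\mathbb{R}^n$ eventually bounded by $\delta$, every solution of $\dot x=f(x)+e(t)$ is eventually bounded by $N\delta$. *)

theory Defs
  imports "HOL-Analysis.Analysis"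
begin

text \<open>Signals are functions on the reals; only their values on [0,\<infinity>) matter.\<close>

definition eventually_bounded :: "(real \<Rightarrow> 'a::real_normed_vector) \<Rightarrow> real \<Rightarrow> bool" where
  "eventually_bounded g \<delta> \<longleftrightarrow> (\<exists>T>0. \<forall>t\<ge>T. norm (g t) \<le> \<delta>)"

definition bounded_measurable_input :: "(real \<Rightarrow> 'a::euclidean_space) \<Rightarrow> bool" where
  "bounded_measurable_input e \<longleftrightarrow>
     set_borel_measurable lborel {0..} e \<and> bounded (e ` {0..})"

text \<open>(Caratheodory) solution on [0,\<infinity>) of  x' = f x + e t : integral equation.\<close>
definition perturbed_solution ::
  "('a::euclidean_space \<Rightarrow> 'a) \<Rightarrow> (real \<Rightarrow> 'a) \<Rightarrow> (real \<Rightarrow> 'a) \<Rightarrow> bool" where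
  "perturbed_solution f e x \<longleftrightarrow>
     (\<forall>t\<ge>0. ((\<lambda>s. f (x s) + e s) has_integral (x t - x 0)) {0..t})"

definition SISS_L :: "real \<Rightarrow> real \<Rightarrow> ('a::euclidean_space \<Rightarrow> 'a) \<Rightarrow> bool" where
  "SISS_L \<Delta> N f \<longleftrightarrow>
     (\<forall>\<delta>. 0 < \<delta> \<and> \<delta> \<le> \<Delta> \<longrightarrow>
        (\<forall>e. bounded_measurable_input e \<and> eventually_bounded e \<delta> \<longrightarrow>
           (\<forall>x. perturbed_solution f e x \<longrightarrow> eventually_bounded x (N * \<delta>))))"

definition ode_solution :: "('a::euclidean_space \<Rightarrow> 'a) \<Rightarrow> (real \<Rightarrow> 'a) \<Rightarrow> bool" where
  "ode_solution f x \<longleftrightarrow> (\<forall>t\<ge>0. (x has_vector_derivative f (x t)) (at t within {0..}))"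

definition lyapunov_stable_origin :: "('a::euclidean_space \<Rightarrow> 'a) \<Rightarrow> bool" where
  "lyapunov_stable_origin f \<longleftrightarrow> f 0 = 0 \<and>
     (\<forall>\<epsilon>>0. \<exists>\<delta>>0. \<forall>x. ode_solution f x \<and> norm (x 0) < \<delta> \<longrightarrow> (\<forall>t\<ge>0. norm (x t) < \<epsilon>))"

definition asymptotically_stable_origin :: "('a::euclidean_space \<Rightarrow> 'a) \<Rightarrow> bool" where
  "asymptotically_stable_origin f \<longleftrightarrow> lyapunov_stable_origin f \<and>
     (\<exists>r>0. \<forall>x. ode_solution f x \<and> norm (x 0) < r \<longrightarrow> (x \<longlongrightarrow> 0) at_top)"

definition globally_asymptotically_stable_origin :: "('a::euclidean_space \<Rightarrow> 'a) \<Rightarrow> bool" where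
  "globally_asymptotically_stable_origin f \<longleftrightarrow> lyapunov_stable_origin f \<and>
     (\<forall>x. ode_solution f x \<longrightarrow> (x \<longlongrightarrow> 0) at_top)"

definition linearization_asymptotically_stable :: "('a::euclidean_space \<Rightarrow> 'a) \<Rightarrow> bool" where
  "linearization_asymptotically_stable f \<longleftrightarrow>
     (\<exists>L. (f has_derivative L) (at 0) \<and> asymptotically_stable_origin L)"

end

theory Submission
  imports Defs
begin

text \<open>With \<open>c = 2\<delta>/\<beta> \<le> 1\<close>, the field \<open>-\<beta> x/\<surd>(1+x\<^sup>2)\<close> has magnitude at least
  \<open>\<beta>c/\<surd>(1+c\<^sup>2) = 2\<delta>/\<surd>(1+c\<^sup>2) > \<delta>\<close> outside \<open>[-c,c]\<close>. So once the disturbance is bounded by \<open>\<delta>\<close>,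
  a solution outside \<open>[-c,c]\<close> moves towards it at a uniform positive speed, reaches it in finite
  time and can never leave it again; and \<open>c \<le> 2\<epsilon>\<delta>/\<beta>\<close>.
  For the unperturbed system, \<open>x f(x) \<le> 0\<close> makes \<open>|x|\<close> nonincreasing, and on \<open>|x| \<le> R\<close> the
  bound \<open>x f(x) \<le> -\<kappa> x\<^sup>2\<close> with \<open>\<kappa> = \<beta>/\<surd>(1+R\<^sup>2)\<close> makes \<open>exp(2\<kappa>t) x(t)\<^sup>2\<close> nonincreasing, giving
  exponential convergence; the linearization \<open>-\<beta> x\<close> is handled the same way.\<close>

lemma has_integral_increment:
  fixes g x :: "real \<Rightarrow> real"
  assumes x: "\<forall>t\<ge>0. (g has_integral (x t - x 0)) {0..t}" and "0 \<le> s" "s \<le> t"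
  shows "(g has_integral (x t - x s)) {s..t}"
proof -
  have x_t: "(g has_integral (x t - x 0)) {0..t}" and x_s: "(g has_integral (x s - x 0)) {0..s}"
    using x assms by auto
  have "g integrable_on {s..t}"
    using integrable_subinterval_real[OF has_integral_integrable[OF x_t]] assms by auto
  then have g_st: "(g has_integral integral {s..t} g) {s..t}"
    by (simp add: integrable_integral)
  have "(g has_integral (x s - x 0 + integral {s..t} g)) {0..t}"
    using has_integral_combine[OF assms(2,3) x_s g_st] .
  then have "x s - x 0 + integral {s..t} g = x t - x 0"
    using x_t by (rule has_integral_unique)
  then have "integral {s..t} g = x t - x s"
    by linarith
  then show ?thesis
    using g_st by simp
qed

lemma integral_equation_continuous_on:
  fixes g x :: "real \<Rightarrow> real"
  assumes x: "\<forall>t\<ge>0. (g has_integral (x t - x 0)) {0..t}"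
  shows "continuous_on {0..b} x"
proof (cases "0 \<le> b")
  case True
  then have "g integrable_on {0..b}"
    using x by blast
  then have "continuous_on {0..b} (\<lambda>t. x 0 + integral {0..t} g)"
    by (intro continuous_intros indefinite_integral_continuous_1)
  moreover have "x 0 + integral {0..t} g = x t" if "t \<in> {0..b}" for t
    using x that integral_unique[of g "x t - x 0" "{0..t}"] by simp
  ultimately show ?thesis
    by (rule continuous_on_eq)
qed simp

lemma integral_equation_decrease:
  fixes g x :: "real \<Rightarrow> real"
  assumes x: "\<forall>t\<ge>0. (g has_integral (x t - x 0)) {0..t}" and "0 \<le> s" "s \<le> t"
    and g: "\<And>u. u \<in> {s..t} \<Longrightarrow> g u \<le> - \<eta>"
  shows "x t \<le> x s - \<eta> * (t - s)"
proof -
  have "x t - x s \<le> (t - s) * - \<eta>"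
    using has_integral_le[OF has_integral_increment[OF assms(1-3)] has_integral_const_real g] \<open>s \<le> t\<close>
    by simp
  then show ?thesis
    by argo
qed

lemma stays_below_level:
  fixes x :: "real \<Rightarrow> real"
  assumes cont: "\<And>b. continuous_on {0..b} x"
    and decr: "\<And>s t. T \<le> s \<Longrightarrow> s \<le> t \<Longrightarrow> (\<forall>u\<in>{s..t}. c \<le> x u) \<Longrightarrow> x t \<le> x s - \<eta> * (t - s)"
    and "0 \<le> T" "T \<le> t\<^sub>1" "x t\<^sub>1 \<le> c" "0 < \<eta>" "t\<^sub>1 \<le> t"
  shows "x t \<le> c"
proof (rule ccontr)
  assume "\<not> x t \<le> c"
  then have above: "c < x t" by simp
  have cont_ab: "continuous_on {a..b} x" if "0 \<le> a" for a b
    using continuous_on_subset[OF cont[of b]] that by auto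
  text \<open>The last time \<open>s \<le> t\<close> at which \<open>x\<close> equals \<open>c\<close>: on \<open>[s,t]\<close> the solution stays above
    \<open>c\<close>, so it decreased from \<open>x s = c\<close>, contradicting \<open>x t > c\<close>.\<close>
  define S where "S = {u \<in> {t\<^sub>1..t}. x u = c}"
  have "S \<noteq> {}"
    using IVT'[of x t\<^sub>1 c t] assms above cont_ab unfolding S_def by auto
  moreover have bdd: "bdd_above S"
    unfolding S_def by (auto intro: bdd_aboveI[of _ t])
  moreover have "closed S"
    unfolding S_def by (rule continuous_closed_preimage_constant) (use cont_ab assms in auto)
  ultimately have "Sup S \<in> S"
    by (rule closed_contains_Sup)
  define s where "s = Sup S"
  have s: "t\<^sub>1 \<le> s" "s \<le> t" "x s = c"
    using \<open>Sup S \<in> S\<close> unfolding s_def S_def by auto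
  have "c \<le> x u" if u: "u \<in> {s..t}" for u
  proof (rule ccontr)
    assume "\<not> c \<le> x u"
    then obtain v where v: "u \<le> v" "v \<le> t" "x v = c"
      using IVT'[of x u c t] u above cont_ab[of u t] s assms by auto
    then have "v \<in> S"
      using u s unfolding S_def by auto
    then have "v \<le> s"
      unfolding s_def using bdd by (simp add: cSup_upper)
    then have "u = v"
      using v u by auto
    then show False
      using v \<open>\<not> c \<le> x u\<close> by simp
  qed
  then have "x t \<le> c - \<eta> * (t - s)"
    using decr[of s t] s assms by auto
  moreover have "0 \<le> \<eta> * (t - s)"
    using s \<open>0 < \<eta>\<close> by simp
  ultimately show False
    using above by linarith
qed

lemma eventually_below_level:
  fixes x :: "real \<Rightarrow> real"
  assumes cont: "\<And>b. continuous_on {0..b} x"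
    and decr: "\<And>s t. T \<le> s \<Longrightarrow> s \<le> t \<Longrightarrow> (\<forall>u\<in>{s..t}. c \<le> x u) \<Longrightarrow> x t \<le> x s - \<eta> * (t - s)"
    and "0 \<le> T" "0 < \<eta>"
  shows "\<exists>T'. \<forall>t\<ge>T'. x t \<le> c"
proof -
  have "\<exists>t\<^sub>1\<ge>T. x t\<^sub>1 \<le> c"
  proof (rule ccontr)
    assume "\<not> ?thesis"
    then have above: "\<forall>u\<ge>T. c \<le> x u"
      by force
    define t where "t = T + \<bar>x T - c\<bar> / \<eta> + 1"
    have "T \<le> t"
      unfolding t_def using assms by auto
    then have "x t \<le> x T - \<eta> * (t - T)"
      using decr[of T t] above by auto
    also have "\<eta> * (t - T) = \<bar>x T - c\<bar> + \<eta>"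
      unfolding t_def using assms by (simp add: field_simps)
    finally have "x t < c"
      using assms by linarith
    then show False
      using above \<open>T \<le> t\<close> by force
  qed
  then obtain t\<^sub>1 where "T \<le> t\<^sub>1" "x t\<^sub>1 \<le> c"
    by blast
  then have "x t \<le> c" if "t\<^sub>1 \<le> t" for t
    using stays_below_level[OF cont decr \<open>0 \<le> T\<close> _ _ \<open>0 < \<eta>\<close> that] by blast
  then show ?thesis
    by blast
qed

lemma perturbed_solution_reflect:
  assumes "perturbed_solution f e x"
  shows "perturbed_solution (\<lambda>y. - f (- y)) (\<lambda>t. - e t) (\<lambda>t. - x t)"
  unfolding perturbed_solution_def
proof (intro allI impI)
  fix t :: real assume "0 \<le> t"
  then have "((\<lambda>s. - (f (x s) + e s)) has_integral - (x t - x 0)) {0..t}"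
    using assms unfolding perturbed_solution_def by (intro has_integral_neg) simp
  then show "((\<lambda>s. - f (- (- x s)) + - e s) has_integral (- x t - (- x 0))) {0..t}"
    by simp
qed

lemma perturbed_solution_eventually_below:
  fixes f e x :: "real \<Rightarrow> real"
  assumes x: "perturbed_solution f e x"
    and e: "\<And>t. T \<le> t \<Longrightarrow> e t \<le> \<delta>" and "0 \<le> T"
    and f: "\<And>y. c \<le> y \<Longrightarrow> f y \<le> - a" and "\<delta> < a"
  shows "\<exists>T'. \<forall>t\<ge>T'. x t \<le> c"
proof (rule eventually_below_level[where \<eta> = "a - \<delta>" and T = T])
  have int: "\<forall>t\<ge>0. ((\<lambda>s. f (x s) + e s) has_integral (x t - x 0)) {0..t}"
    using x unfolding perturbed_solution_def .
  show "continuous_on {0..b} x" for b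
    using integral_equation_continuous_on[OF int] .
  show "x t \<le> x s - (a - \<delta>) * (t - s)" if "T \<le> s" "s \<le> t" "\<forall>u\<in>{s..t}. c \<le> x u" for s t
  proof (rule integral_equation_decrease[OF int])
    fix u assume "u \<in> {s..t}"
    then have "f (x u) \<le> - a" "e u \<le> \<delta>"
      using f e that by auto
    then show "f (x u) + e u \<le> - (a - \<delta>)"
      by linarith
  qed (use that \<open>0 \<le> T\<close> in auto)
qed (use assms in auto)

lemma perturbed_solution_eventually_bounded:
  fixes f e x :: "real \<Rightarrow> real"
  assumes x: "perturbed_solution f e x" and e: "eventually_bounded e \<delta>"
    and f_pos: "\<And>y. c \<le> y \<Longrightarrow> f y \<le> - a" and f_neg: "\<And>y. y \<le> - c \<Longrightarrow> a \<le> f y"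
    and "\<delta> < a"
  shows "eventually_bounded x c"
proof -
  obtain T where "0 < T" and e_T: "\<And>t. T \<le> t \<Longrightarrow> \<bar>e t\<bar> \<le> \<delta>"
    using e unfolding eventually_bounded_def by auto
  have "\<exists>T'. \<forall>t\<ge>T'. x t \<le> c"
  proof (rule perturbed_solution_eventually_below[OF x _ _ f_pos \<open>\<delta> < a\<close>])
    show "e t \<le> \<delta>" if "T \<le> t" for t
      using e_T[OF that] by linarith
  qed (use \<open>0 < T\<close> in auto)
  then obtain T\<^sub>1 where T\<^sub>1: "\<forall>t\<ge>T\<^sub>1. x t \<le> c"
    by blast
  have "\<exists>T'. \<forall>t\<ge>T'. - x t \<le> c"
  proof (rule perturbed_solution_eventually_below[OF perturbed_solution_reflect[OF x]])
    show "- e t \<le> \<delta>" if "T \<le> t" for t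
      using e_T[OF that] by linarith
    show "- f (- y) \<le> - a" if "c \<le> y" for y
      using f_neg[of "- y"] that by simp
  qed (use \<open>0 < T\<close> \<open>\<delta> < a\<close> in auto)
  then obtain T\<^sub>2 where T\<^sub>2: "\<forall>t\<ge>T\<^sub>2. - x t \<le> c"
    by blast
  have "\<bar>x t\<bar> \<le> c" if "max T\<^sub>1 T\<^sub>2 \<le> t" for t
    using T\<^sub>1 T\<^sub>2 that by (simp add: abs_le_iff)
  then show ?thesis
    unfolding eventually_bounded_def by (intro exI[of _ "max 1 (max T\<^sub>1 T\<^sub>2)"]) auto
qed

lemma ode_solution_exp_weighted_square_le:
  fixes g x :: "real \<Rightarrow> real"
  assumes x: "ode_solution g x"
    and g: "\<forall>t\<ge>0. x t * g (x t) \<le> - \<kappa> * (x t)\<^sup>2" and "0 \<le> t"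
  shows "exp (2 * \<kappa> * t) * (x t)\<^sup>2 \<le> (x 0)\<^sup>2"
proof -
  define V where "V u = exp (2 * \<kappa> * u) * (x u)\<^sup>2" for u
  have "(x has_real_derivative g (x u)) (at u within {0..})" if "0 \<le> u" for u
    using x that unfolding ode_solution_def
    by (simp add: has_real_derivative_iff_has_vector_derivative)
  then have V': "(V has_real_derivative 2 * exp (2 * \<kappa> * u) * (x u * g (x u) + \<kappa> * (x u)\<^sup>2))
      (at u within {0..})" if "0 \<le> u" for u
    unfolding V_def using that
    by (auto intro!: derivative_eq_intros simp: algebra_simps power2_eq_square)
  have "continuous (at u within {0..}) V" if "0 \<le> u" for u
    using V'[OF that] by (rule DERIV_continuous)
  then have "continuous_on {0..} V"
    by (simp add: continuous_on_eq_continuous_within)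
  then have "continuous_on {0..t} V"
    by (rule continuous_on_subset) auto
  moreover have "\<exists>y. (V has_real_derivative y) (at u) \<and> y \<le> 0" if "0 < u" "u < t" for u
  proof -
    have "at u within {0..} = at u"
      by (rule at_within_interior) (use that in auto)
    moreover have "2 * exp (2 * \<kappa> * u) * (x u * g (x u) + \<kappa> * (x u)\<^sup>2) \<le> 0"
      using g[rule_format, of u] that by (intro mult_nonneg_nonpos) auto
    ultimately show ?thesis
      using V'[of u] that by auto
  qed
  ultimately have "V t \<le> V 0"
    using DERIV_nonpos_imp_decreasing_open[OF \<open>0 \<le> t\<close>] by blast
  then show ?thesis
    unfolding V_def by simp
qed

lemma ode_solution_abs_le_exp:
  fixes g x :: "real \<Rightarrow> real"
  assumes x: "ode_solution g x"
    and g: "\<forall>t\<ge>0. x t * g (x t) \<le> - \<kappa> * (x t)\<^sup>2" and "0 \<le> t"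
  shows "\<bar>x t\<bar> \<le> \<bar>x 0\<bar> * exp (- \<kappa> * t)"
proof (rule power2_le_imp_le)
  have "exp (- \<kappa> * t) ^ 2 * exp (2 * \<kappa> * t) = 1"
    by (simp add: power2_eq_square flip: exp_add)
  then have "\<bar>x t\<bar>\<^sup>2 = exp (- \<kappa> * t) ^ 2 * (exp (2 * \<kappa> * t) * (x t)\<^sup>2)"
    by (metis mult.assoc mult_1 power2_abs)
  also have "\<dots> \<le> exp (- \<kappa> * t) ^ 2 * (x 0)\<^sup>2"
    by (intro mult_left_mono ode_solution_exp_weighted_square_le[OF assms]) simp
  finally show "\<bar>x t\<bar>\<^sup>2 \<le> (\<bar>x 0\<bar> * exp (- \<kappa> * t))\<^sup>2"
    by (simp add: power_mult_distrib mult.commute)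
qed simp

lemma ode_solution_tendsto_zero:
  fixes g x :: "real \<Rightarrow> real"
  assumes x: "ode_solution g x" and "0 < \<kappa>"
    and g: "\<forall>t\<ge>0. x t * g (x t) \<le> - \<kappa> * (x t)\<^sup>2"
  shows "(x \<longlongrightarrow> 0) at_top"
proof (rule Lim_null_comparison)
  have "norm (x t) \<le> \<bar>x 0\<bar> * exp (- \<kappa> * t)" if "0 \<le> t" for t
    using ode_solution_abs_le_exp[OF x g that] by simp
  then show "\<forall>\<^sub>F t in at_top. norm (x t) \<le> \<bar>x 0\<bar> * exp (- \<kappa> * t)"
    using eventually_ge_at_top[of 0] by (rule eventually_mono[rotated])
  show "((\<lambda>t. \<bar>x 0\<bar> * exp (- \<kappa> * t)) \<longlongrightarrow> 0) at_top"
    using \<open>0 < \<kappa>\<close>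
    by (auto intro!: tendsto_mult_right_zero exp_at_bot[THEN filterlim_compose]
        filterlim_tendsto_pos_mult_at_top filterlim_ident simp: filterlim_uminus_at_bot)
qed

lemma ode_solution_abs_le_initial:
  fixes g x :: "real \<Rightarrow> real"
  assumes "ode_solution g x" and "\<forall>y. y * g y \<le> 0" and "0 \<le> t"
  shows "\<bar>x t\<bar> \<le> \<bar>x 0\<bar>"
  using ode_solution_abs_le_exp[where \<kappa> = 0] assms by simp

lemma lyapunov_stable_originI:
  fixes g :: "real \<Rightarrow> real"
  assumes "g 0 = 0" and g: "\<forall>y. y * g y \<le> 0"
  shows "lyapunov_stable_origin g"
  unfolding lyapunov_stable_origin_def
proof (intro conjI allI impI \<open>g 0 = 0\<close>)
  fix \<epsilon> :: real assume "0 < \<epsilon>"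
  have "norm (x t) < \<epsilon>" if "ode_solution g x \<and> norm (x 0) < \<epsilon>" "0 \<le> t" for x t
    using ode_solution_abs_le_initial[OF _ g, of x t] that by simp
  with \<open>0 < \<epsilon>\<close> show "\<exists>\<delta>>0. \<forall>x. ode_solution g x \<and> norm (x 0) < \<delta> \<longrightarrow> (\<forall>t\<ge>0. norm (x t) < \<epsilon>)"
    by blast
qed

lemma globally_asymptotically_stable_originI:
  fixes g :: "real \<Rightarrow> real"
  assumes "g 0 = 0" and g: "\<forall>y. y * g y \<le> 0"
    and g_ball: "\<And>R. \<exists>\<kappa>>0. \<forall>y. \<bar>y\<bar> \<le> R \<longrightarrow> y * g y \<le> - \<kappa> * y\<^sup>2"
  shows "globally_asymptotically_stable_origin g"
proof -
  have "(x \<longlongrightarrow> 0) at_top" if x: "ode_solution g x" for x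
  proof -
    obtain \<kappa> where "0 < \<kappa>" and \<kappa>: "\<forall>y. \<bar>y\<bar> \<le> \<bar>x 0\<bar> \<longrightarrow> y * g y \<le> - \<kappa> * y\<^sup>2"
      using g_ball by blast
    have "x t * g (x t) \<le> - \<kappa> * (x t)\<^sup>2" if "0 \<le> t" for t
      using \<kappa> ode_solution_abs_le_initial[OF x g that] by blast
    then show ?thesis
      using ode_solution_tendsto_zero[OF x \<open>0 < \<kappa>\<close>] by blast
  qed
  then show ?thesis
    unfolding globally_asymptotically_stable_origin_def
    using lyapunov_stable_originI[OF assms(1,2)] by blast
qed

lemma asymptotically_stable_if_globally:
  "globally_asymptotically_stable_origin g \<Longrightarrow> asymptotically_stable_origin g"
  unfolding globally_asymptotically_stable_origin_def asymptotically_stable_origin_def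
  using zero_less_one by blast

lemma div_sqrt_one_plus_square_mono:
  fixes c y :: real
  assumes "0 \<le> c" "c \<le> y"
  shows "c / sqrt (1 + c\<^sup>2) \<le> y / sqrt (1 + y\<^sup>2)"
proof -
  have "c\<^sup>2 * (1 + y\<^sup>2) \<le> y\<^sup>2 * (1 + c\<^sup>2)"
    using power_mono[OF assms(2) assms(1), of 2] by (simp add: algebra_simps)
  then have "c * sqrt (1 + y\<^sup>2) \<le> y * sqrt (1 + c\<^sup>2)"
    using real_sqrt_le_mono assms by (fastforce simp: real_sqrt_mult)
  then show ?thesis
    by (simp add: divide_simps add_pos_nonneg)
qed

lemma saturated_field_dissipative:
  fixes \<beta> y R :: real
  assumes "0 < \<beta>" "\<bar>y\<bar> \<le> R"
  shows "y * (- \<beta> * y / sqrt (1 + y\<^sup>2)) \<le> - (\<beta> / sqrt (1 + R\<^sup>2)) * y\<^sup>2"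
proof -
  have "sqrt (1 + y\<^sup>2) \<le> sqrt (1 + R\<^sup>2)"
    using assms abs_le_square_iff[of y R] by simp
  then have "\<beta> * y\<^sup>2 / sqrt (1 + R\<^sup>2) \<le> \<beta> * y\<^sup>2 / sqrt (1 + y\<^sup>2)"
    by (rule divide_left_mono) (use assms in \<open>auto intro!: mult_pos_pos add_pos_nonneg\<close>)
  then show ?thesis
    by (simp add: power2_eq_square ac_simps)
qed

lemma saturated_field_inward:
  fixes \<beta> y :: real
  assumes "0 < \<beta>"
  shows "y * (- \<beta> * y / sqrt (1 + y\<^sup>2)) \<le> 0"
proof -
  have "0 \<le> \<beta> / sqrt (1 + \<bar>y\<bar>\<^sup>2) * y\<^sup>2"
    using assms by simp
  then show ?thesis
    using saturated_field_dissipative[OF assms, of y "\<bar>y\<bar>"] by linarith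
qed

lemma SISS_L_saturated_field:
  fixes \<epsilon> \<beta> :: real
  assumes "1 < \<epsilon>" "0 < \<beta>"
  shows "SISS_L (\<beta> / 2) (2 * \<epsilon> / \<beta>) (\<lambda>y::real. - \<beta> * y / sqrt (1 + y\<^sup>2))"
  unfolding SISS_L_def
proof (intro allI impI)
  fix \<delta> :: real and e x :: "real \<Rightarrow> real"
  assume \<delta>: "0 < \<delta> \<and> \<delta> \<le> \<beta> / 2"
    and e: "bounded_measurable_input e \<and> eventually_bounded e \<delta>"
    and x: "perturbed_solution (\<lambda>y. - \<beta> * y / sqrt (1 + y\<^sup>2)) e x"
  define c where "c = 2 * \<delta> / \<beta>"
  define a where "a = \<beta> * (c / sqrt (1 + c\<^sup>2))"
  have "0 < c" "c \<le> 1" and \<delta>_c: "\<delta> = \<beta> * c / 2"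
    unfolding c_def using \<delta> assms by (auto simp: field_simps)
  have "sqrt (1 + c\<^sup>2) < 2"
    using real_sqrt_less_mono[of "1 + c\<^sup>2" "2\<^sup>2"] power_mono[OF \<open>c \<le> 1\<close>, of 2] \<open>0 < c\<close> by simp
  then have "\<beta> * c / 2 < \<beta> * c / sqrt (1 + c\<^sup>2)"
    using \<open>0 < c\<close> assms by (intro divide_strict_left_mono) (simp_all add: add_pos_nonneg)
  then have "\<delta> < a"
    unfolding a_def \<delta>_c by simp
  have f_pos: "- \<beta> * y / sqrt (1 + y\<^sup>2) \<le> - a" if "c \<le> y" for y
    using mult_left_mono[OF div_sqrt_one_plus_square_mono[OF _ that]] \<open>0 < c\<close> assms
    unfolding a_def by simp
  have "eventually_bounded x c"
  proof (rule perturbed_solution_eventually_bounded[OF x _ f_pos _ \<open>\<delta> < a\<close>])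
    show "eventually_bounded e \<delta>"
      using e by blast
    show "a \<le> - \<beta> * y / sqrt (1 + y\<^sup>2)" if "y \<le> - c" for y
      using f_pos[of "- y"] that by simp
  qed
  moreover have "c \<le> 2 * \<epsilon> / \<beta> * \<delta>"
    unfolding c_def using assms \<delta> by (simp add: field_simps)
  ultimately show "eventually_bounded x (2 * \<epsilon> / \<beta> * \<delta>)"
    unfolding eventually_bounded_def by force
qed

lemma globally_asymptotically_stable_saturated_field:
  fixes \<beta> :: real
  assumes "0 < \<beta>"
  shows "globally_asymptotically_stable_origin (\<lambda>y::real. - \<beta> * y / sqrt (1 + y\<^sup>2))"
proof (rule globally_asymptotically_stable_originI)
  show "\<exists>\<kappa>>0. \<forall>y. \<bar>y\<bar> \<le> R \<longrightarrow> y * (- \<beta> * y / sqrt (1 + y\<^sup>2)) \<le> - \<kappa> * y\<^sup>2" for R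
    using saturated_field_dissipative[OF assms] assms
    by (intro exI[of _ "\<beta> / sqrt (1 + R\<^sup>2)"]) (simp add: add_pos_nonneg)
qed (use saturated_field_inward[OF assms] in simp_all)

lemma linearization_asymptotically_stable_saturated_field:
  fixes \<beta> :: real
  assumes "0 < \<beta>"
  shows "linearization_asymptotically_stable (\<lambda>y::real. - \<beta> * y / sqrt (1 + y\<^sup>2))"
  unfolding linearization_asymptotically_stable_def
proof (intro exI conjI)
  have "((\<lambda>y::real. - \<beta> * y / sqrt (1 + y\<^sup>2)) has_real_derivative - \<beta>) (at 0)"
    by (auto intro!: derivative_eq_intros)
  then show "((\<lambda>y::real. - \<beta> * y / sqrt (1 + y\<^sup>2)) has_derivative (*) (- \<beta>)) (at 0)"
    by (simp add: has_field_derivative_def)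
  have linear_field: "y * (- \<beta> * y) = - \<beta> * y\<^sup>2" for y
    by (simp add: power2_eq_square)
  have "globally_asymptotically_stable_origin ((*) (- \<beta>))"
  proof (rule globally_asymptotically_stable_originI)
    show "\<exists>\<kappa>>0. \<forall>y. \<bar>y\<bar> \<le> R \<longrightarrow> y * (- \<beta> * y) \<le> - \<kappa> * y\<^sup>2" for R
      unfolding linear_field using assms by blast
    show "\<forall>y. y * (- \<beta> * y) \<le> 0"
      unfolding linear_field using assms by simp
  qed simp
  then show "asymptotically_stable_origin ((*) (- \<beta>))"
    by (rule asymptotically_stable_if_globally)
qed

theorem lemma2:
  fixes \<epsilon> \<beta> :: real
  assumes "\<epsilon> > 1" and "\<beta> > 0"
  defines "f \<equiv> (\<lambda>x::real. - \<beta> * x / sqrt (1 + x\<^sup>2))"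
  shows "SISS_L (\<beta> / 2) (2 * \<epsilon> / \<beta>) f
       \<and> globally_asymptotically_stable_origin f
       \<and> linearization_asymptotically_stable f"
  unfolding f_def
  using SISS_L_saturated_field[OF assms(1,2)]
    globally_asymptotically_stable_saturated_field[OF assms(2)]
    linearization_asymptotically_stable_saturated_field[OF assms(2)]
  by blast

end
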